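(* Suppose Assumptions (C1), (C2), (C3) and (CV) hold. If $x\in\mathcal{X}$ is such that $y^*(x)$ is a single point, then $\lim_{t\to0^+}\widetilde\phi_t(x)=\phi(x)$.
   Context: Let $f,g,h_1,\dots,h_k:\mathbb{R}^n\times\mathbb{R}^m\to\mathbb{R}$ and $\mathcal{X}\subseteq\mathbb{R}^n$. For $x\in\mathcal{X}$ let $\mathcal{Y}(x)=\{y: h_i(x,y)\le 0,\ i=1,\dots,k\}$, $y^*(x)=\arg\min_{y\in\mathcal{Y}(x)} g(x,y)$, and $\phi(x)=\min_{y\in y^*(x)} f(x,y)$. For $t>0$ let $\widetilde g_t(x,y)=g(x,y)-t\sum_{i=1}^k\log(-h_i(x,y))$ (defined when all $h_i(x,y)<0$), $y_t^*(x)=\arg\min_y\widetilde g_t(x,y)$ and $\widetilde\phi_t(x)=f(x,y_t^*(x))$. Assumptions: (C1) $f$ is once and $g,h_i$ twice continuously differentiable on the relevant domain; (C2) $\mathcal{X}$ is convex and compact and for every $x\in\mathcal{X}$ there exists $y\in\mathcal{Y}(x)$ with $h_i(x,y)<0$ for all $i\in\{1,\dots,k\}$; (C3) for every $x\in\mathcal{X}$, $\mathcal{Y}(x)$ is compact and $\|y\|\le R$ for all $y\in\mathcal{Y}(x)$; (CV) for every $x$, $g(x,\cdot)$ is convex and each $h_i(x,\cdot)$ is convex, and at least one $h_i(x,\cdot)$ is strongly convex in $y$. *)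

theory Defs
  imports "HOL-Analysis.Analysis"
begin

definition C1_on :: "('a::real_normed_vector \<Rightarrow> 'b::real_normed_vector) \<Rightarrow> 'a set \<Rightarrow> bool" where
  "C1_on F S \<longleftrightarrow> (\<exists>F'. (\<forall>z\<in>S. (F has_derivative blinfun_apply (F' z)) (at z)) \<and> continuous_on S F')"

definition C2_on :: "('a::real_normed_vector \<Rightarrow> 'b::real_normed_vector) \<Rightarrow> 'a set \<Rightarrow> bool" where
  "C2_on F S \<longleftrightarrow> (\<exists>F'. (\<forall>z\<in>S. (F has_derivative blinfun_apply (F' z)) (at z)) \<and> C1_on F' S)"

definition strongly_convex_on :: "'a::real_inner set \<Rightarrow> ('a \<Rightarrow> real) \<Rightarrow> bool" where
  "strongly_convex_on S F \<longleftrightarrow> (\<exists>mu>0. \<forall>u\<in>S. \<forall>v\<in>S. \<forall>s::real. 0 \<le> s \<and> s \<le> 1 \<longrightarrow>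
      F (s *\<^sub>R u + (1 - s) *\<^sub>R v) \<le> s * F u + (1 - s) * F v - mu / 2 * s * (1 - s) * (norm (u - v))\<^sup>2)"

definition feas :: "nat \<Rightarrow> (nat \<Rightarrow> 'x \<Rightarrow> 'y \<Rightarrow> real) \<Rightarrow> 'x \<Rightarrow> 'y set" where
  "feas k h x = {y. \<forall>i\<in>{1..k}. h i x y \<le> 0}"

definition ystar :: "('x \<Rightarrow> 'y \<Rightarrow> real) \<Rightarrow> nat \<Rightarrow> (nat \<Rightarrow> 'x \<Rightarrow> 'y \<Rightarrow> real) \<Rightarrow> 'x \<Rightarrow> 'y set" where
  "ystar g k h x = {y \<in> feas k h x. \<forall>z\<in>feas k h x. g x y \<le> g x z}"

definition phi :: "('x \<Rightarrow> 'y \<Rightarrow> real) \<Rightarrow> ('x \<Rightarrow> 'y \<Rightarrow> real) \<Rightarrow> nat \<Rightarrow> (nat \<Rightarrow> 'x \<Rightarrow> 'y \<Rightarrow> real) \<Rightarrow> 'x \<Rightarrow> real" where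
  "phi f g k h x = Min (f x ` ystar g k h x)"

definition gbar :: "real \<Rightarrow> ('x \<Rightarrow> 'y \<Rightarrow> real) \<Rightarrow> nat \<Rightarrow> (nat \<Rightarrow> 'x \<Rightarrow> 'y \<Rightarrow> real) \<Rightarrow> 'x \<Rightarrow> 'y \<Rightarrow> real" where
  "gbar t g k h x y = g x y - t * (\<Sum>i=1..k. ln (- h i x y))"

definition sfeas :: "nat \<Rightarrow> (nat \<Rightarrow> 'x \<Rightarrow> 'y \<Rightarrow> real) \<Rightarrow> 'x \<Rightarrow> 'y set" where
  "sfeas k h x = {y. \<forall>i\<in>{1..k}. h i x y < 0}"

definition ytstar :: "real \<Rightarrow> ('x \<Rightarrow> 'y \<Rightarrow> real) \<Rightarrow> nat \<Rightarrow> (nat \<Rightarrow> 'x \<Rightarrow> 'y \<Rightarrow> real) \<Rightarrow> 'x \<Rightarrow> 'y" where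
  "ytstar t g k h x = (THE y. y \<in> sfeas k h x \<and> (\<forall>z\<in>sfeas k h x. gbar t g k h x y \<le> gbar t g k h x z))"

definition phit :: "real \<Rightarrow> ('x \<Rightarrow> 'y \<Rightarrow> real) \<Rightarrow> ('x \<Rightarrow> 'y \<Rightarrow> real) \<Rightarrow> nat \<Rightarrow> (nat \<Rightarrow> 'x \<Rightarrow> 'y \<Rightarrow> real) \<Rightarrow> 'x \<Rightarrow> real" where
  "phit t f g k h x = f x (ytstar t g k h x)"

end

(*
  For t > 0 the barrier g~_t(x,.) tends to +infinity at the boundary of the feasible set, because
  one log term tends to -infinity while the others stay bounded on the compact set Y(x). Hence it
  attains its minimum on a compact sublevel set inside the strictly feasible set, and the
  minimizer is unique since the strongly convex constraint makes the barrier strictly convex.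
  Comparing the barrier at y_t*(x) with its value at a strictly feasible z gives
  g(x, y_t*(x)) <= g(x, z) + O(t), and strictly feasible points approximate every feasible point.
  So g(x, y_t*(x)) is eventually close to min g(x,.) over Y(x); as this minimum is attained only at
  the point y*(x) of a compact set, y_t*(x) tends to it, and continuity of f gives the claim.
*)
theory Submission
  imports Defs
begin

lemma C1_on_imp_continuous_on:
  assumes "C1_on F S"
  shows "continuous_on S F"
proof -
  from assms obtain F' where "\<forall>z\<in>S. (F has_derivative blinfun_apply (F' z)) (at z)"
    unfolding C1_on_def by blast
  then show ?thesis by (intro has_derivative_continuous_on) (auto intro: has_derivative_at_withinI)
qed

lemma C2_on_imp_C1_on:
  assumes "C2_on F S"
  shows "C1_on F S"
proof -
  from assms obtain F' where "\<forall>z\<in>S. (F has_derivative blinfun_apply (F' z)) (at z)" "C1_on F' S"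
    unfolding C2_on_def by blast
  with C1_on_imp_continuous_on[OF \<open>C1_on F' S\<close>] show ?thesis
    unfolding C1_on_def by blast
qed

lemma continuous_on_slice:
  assumes "continuous_on UNIV (\<lambda>z. F (fst z) (snd z))"
  shows "continuous_on UNIV (F x)"
  using continuous_on_compose2[OF assms continuous_on_Pair[OF continuous_on_const continuous_on_id]]
  by simp

lemma sfeas_subset_feas: "sfeas k h x \<subseteq> feas k h x"
  unfolding sfeas_def feas_def by (auto intro: less_imp_le)

lemma midpoint_eq_convex_combination: "midpoint u v = (1 - 1/2) *\<^sub>R u + (1/2::real) *\<^sub>R v"
  by (simp add: midpoint_def scaleR_add_right)

lemma strongly_convex_on_midpoint_less:
  assumes "strongly_convex_on S F" "u \<in> S" "v \<in> S" "u \<noteq> v"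
  shows "F (midpoint u v) < (F u + F v) / 2"
proof -
  obtain mu where "mu > 0" and sc: "\<forall>u\<in>S. \<forall>v\<in>S. \<forall>s::real. 0 \<le> s \<and> s \<le> 1 \<longrightarrow>
      F (s *\<^sub>R u + (1 - s) *\<^sub>R v) \<le> s * F u + (1 - s) * F v - mu / 2 * s * (1 - s) * (norm (u - v))\<^sup>2"
    using assms(1) unfolding strongly_convex_on_def by blast
  have "F (midpoint u v) \<le> (F u + F v) / 2 - mu / 8 * (norm (u - v))\<^sup>2"
    using sc[rule_format, of u v "1/2"] assms(2,3)
    by (simp add: midpoint_eq_convex_combination add_divide_distrib)
  moreover have "mu / 8 * (norm (u - v))\<^sup>2 > 0" using \<open>mu > 0\<close> assms(4) by simp
  ultimately show ?thesis by linarith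
qed

lemma ln_neg_midpoint_le:
  fixes a b c :: real
  assumes "a < 0" "b < 0" "c \<le> (a + b) / 2"
  shows "(ln (- a) + ln (- b)) / 2 \<le> ln (- c)"
proof -
  have "(ln (- a) + ln (- b)) / 2 \<le> ln (- ((a + b) / 2))"
    using concave_onD[OF ln_concave, of "1/2" "- a" "- b"] assms(1,2) by (simp add: add_divide_distrib)
  also have "\<dots> \<le> ln (- c)" using assms by (subst ln_le_cancel_iff) auto
  finally show ?thesis .
qed

lemma ln_neg_midpoint_less:
  fixes a b c :: real
  assumes "a < 0" "b < 0" "c < (a + b) / 2"
  shows "(ln (- a) + ln (- b)) / 2 < ln (- c)"
proof -
  have "(ln (- a) + ln (- b)) / 2 \<le> ln (- ((a + b) / 2))"
    using ln_neg_midpoint_le[OF assms(1,2) order_refl] .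
  also have "\<dots> < ln (- c)" using assms by (subst ln_less_cancel_iff) auto
  finally show ?thesis .
qed

lemma sum_le_member_plus_card_mult:
  fixes b :: "'a \<Rightarrow> 'b::linordered_idom"
  assumes "finite I" "j \<in> I" "\<And>l. l \<in> I \<Longrightarrow> b l \<le> B" "B \<ge> 0"
  shows "sum b I \<le> b j + of_nat (card I) * B"
proof -
  have "sum b (I - {j}) \<le> of_nat (card (I - {j})) * B"
    using assms(3) by (intro sum_bounded_above) auto
  also have "\<dots> \<le> of_nat (card I) * B"
    using assms(4) card_Diff1_le[of I j] by (intro mult_right_mono) auto
  finally show ?thesis using sum.remove[OF assms(1,2), of b] by simp
qed

lemma midpoint_strictly_convex_argmin_unique:
  fixes G :: "'a::real_vector \<Rightarrow> real"
  assumes mid: "\<And>u v. u \<in> S \<Longrightarrow> v \<in> S \<Longrightarrow> u \<noteq> v \<Longrightarrow>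
      midpoint u v \<in> S \<and> G (midpoint u v) < (G u + G v) / 2"
    and "u \<in> S" "\<forall>z\<in>S. G u \<le> G z" "v \<in> S" "\<forall>z\<in>S. G v \<le> G z"
  shows "u = v"
proof (rule ccontr)
  assume "u \<noteq> v"
  then have "midpoint u v \<in> S" "G (midpoint u v) < (G u + G v) / 2"
    using mid assms(2,4) by blast+
  with assms(3,5) show False by fastforce
qed

lemma compact_unique_argmin_near:
  fixes G :: "'a::metric_space \<Rightarrow> real"
  assumes "compact K" "continuous_on K G" "y0 \<in> K"
    and unique: "\<And>y. y \<in> K \<Longrightarrow> y \<noteq> y0 \<Longrightarrow> G y0 < G y" and "e > 0"
  obtains \<eta> where "\<eta> > 0" "\<And>y. y \<in> K \<Longrightarrow> G y < G y0 + \<eta> \<Longrightarrow> dist y y0 < e"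
proof (cases "K - ball y0 e = {}")
  case True
  then show ?thesis by (intro that[of 1]) (auto simp: dist_commute)
next
  case False
  have "compact (K - ball y0 e)" using assms(1) by (rule compact_diff) simp
  then obtain yK where yK: "yK \<in> K - ball y0 e" "\<And>y. y \<in> K - ball y0 e \<Longrightarrow> G yK \<le> G y"
    using continuous_attains_inf[OF _ False continuous_on_subset[OF assms(2)]] by blast
  have "yK \<noteq> y0" using yK(1) \<open>e > 0\<close> by auto
  then have "G yK - G y0 > 0" using unique yK(1) by auto
  then show ?thesis
  proof (rule that)
    fix y assume "y \<in> K" "G y < G y0 + (G yK - G y0)"
    then show "dist y y0 < e" using yK(2)[of y] by (force simp: dist_commute)
  qed
qed

locale log_barrier =
  fixes g :: "'x \<Rightarrow> 'y::real_inner \<Rightarrow> real" and k :: nat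
    and h :: "nat \<Rightarrow> 'x \<Rightarrow> 'y \<Rightarrow> real" and x :: 'x
  assumes compact_feas: "compact (feas k h x)"
    and sfeas_nonempty: "sfeas k h x \<noteq> {}"
    and continuous_g: "continuous_on UNIV (g x)"
    and continuous_h: "\<And>l. l \<in> {1..k} \<Longrightarrow> continuous_on UNIV (h l x)"
    and convex_g: "convex_on UNIV (g x)"
    and convex_h: "\<And>l. l \<in> {1..k} \<Longrightarrow> convex_on UNIV (h l x)"
    and strongly_convex_h: "\<exists>i\<in>{1..k}. strongly_convex_on UNIV (h i x)"
begin

lemma feas_constraints_bounded:
  obtains M where "M \<ge> 1" "\<And>y l. y \<in> feas k h x \<Longrightarrow> l \<in> {1..k} \<Longrightarrow> - h l x y \<le> M"
proof -
  have "bounded (\<Union>l\<in>{1..k}. h l x ` feas k h x)"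
    using compact_feas continuous_h
    by (intro bounded_UN ballI compact_imp_bounded compact_continuous_image) (auto intro: continuous_on_subset)
  then obtain B where "\<And>y l. y \<in> feas k h x \<Longrightarrow> l \<in> {1..k} \<Longrightarrow> \<bar>h l x y\<bar> \<le> B"
    unfolding bounded_iff by fastforce
  then show ?thesis by (intro that[of "max 1 B"]) (auto dest!: abs_le_D2 intro: max.coboundedI2)
qed

lemma sum_ln_constraints_bounded:
  obtains B where "\<And>y. y \<in> sfeas k h x \<Longrightarrow> (\<Sum>l=1..k. ln (- h l x y)) \<le> B"
proof -
  obtain M where M: "M \<ge> 1" "\<And>y l. y \<in> feas k h x \<Longrightarrow> l \<in> {1..k} \<Longrightarrow> - h l x y \<le> M"
    using feas_constraints_bounded by blast
  have "(\<Sum>l=1..k. ln (- h l x y)) \<le> real k * ln M" if "y \<in> sfeas k h x" for y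
    using sum_bounded_above[of "{1..k}" "\<lambda>l. ln (- h l x y)" "ln M"] M(2)[of y] that
      sfeas_subset_feas[of k h x]
    by (force simp: sfeas_def)
  then show ?thesis by (rule that)
qed

lemma gbar_large_near_boundary:
  assumes "t > 0"
  obtains \<delta> where "\<delta> > 0"
    "\<And>y j. y \<in> sfeas k h x \<Longrightarrow> j \<in> {1..k} \<Longrightarrow> - h j x y < \<delta> \<Longrightarrow> c < gbar t g k h x y"
proof -
  obtain M where M: "M \<ge> 1" "\<And>y l. y \<in> feas k h x \<Longrightarrow> l \<in> {1..k} \<Longrightarrow> - h l x y \<le> M"
    using feas_constraints_bounded by blast
  have "feas k h x \<noteq> {}" using sfeas_nonempty sfeas_subset_feas[of k h x] by blast
  then obtain ym where ym: "\<forall>y\<in>feas k h x. g x ym \<le> g x y"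
    using continuous_attains_inf[OF compact_feas _ continuous_on_subset[OF continuous_g subset_UNIV]]
    by blast
  define \<delta> where "\<delta> = exp ((g x ym - c) / t - real k * ln M)"
  have "c < gbar t g k h x y"
    if y: "y \<in> sfeas k h x" and j: "j \<in> {1..k}" and near: "- h j x y < \<delta>" for y j
  proof -
    have neg: "\<And>l. l \<in> {1..k} \<Longrightarrow> 0 < - h l x y" using y by (simp add: sfeas_def)
    have "ln (- h l x y) \<le> ln M" if "l \<in> {1..k}" for l
      using M(2)[OF _ that] neg[OF that] y sfeas_subset_feas by fastforce
    then have "(\<Sum>l=1..k. ln (- h l x y)) \<le> ln (- h j x y) + real k * ln M"
      using sum_le_member_plus_card_mult[of "{1..k}" j "\<lambda>l. ln (- h l x y)" "ln M"] j M(1) by simp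
    also have "\<dots> < (g x ym - c) / t"
      using near neg[OF j] ln_less_cancel_iff[of "- h j x y" \<delta>] unfolding \<delta>_def by simp
    finally have "t * (\<Sum>l=1..k. ln (- h l x y)) < g x ym - c"
      using \<open>t > 0\<close> by (simp add: field_simps)
    moreover have "g x ym \<le> g x y" using ym y sfeas_subset_feas[of k h x] by blast
    ultimately show ?thesis unfolding gbar_def by linarith
  qed
  then show ?thesis by (intro that[of \<delta>]) (auto simp: \<delta>_def)
qed

lemma gbar_has_min:
  assumes "t > 0"
  shows "\<exists>y\<in>sfeas k h x. \<forall>z\<in>sfeas k h x. gbar t g k h x y \<le> gbar t g k h x z"
proof -
  obtain z0 where z0: "z0 \<in> sfeas k h x" using sfeas_nonempty by blast
  obtain \<delta> where "\<delta> > 0" and large: "\<And>y j. y \<in> sfeas k h x \<Longrightarrow> j \<in> {1..k} \<Longrightarrow>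
      - h j x y < \<delta> \<Longrightarrow> gbar t g k h x z0 < gbar t g k h x y"
    using gbar_large_near_boundary[OF assms] by blast
  define L where "L = feas k h x \<inter> (\<Inter>l\<in>{1..k}. {y. h l x y \<le> - \<delta>})"
  have L_sfeas: "L \<subseteq> sfeas k h x" using \<open>\<delta> > 0\<close> by (force simp: L_def sfeas_def)
  have outside_L: "gbar t g k h x z0 < gbar t g k h x y" if "y \<in> sfeas k h x" "y \<notin> L" for y
    using that large sfeas_subset_feas by (force simp: L_def)
  have "compact L" unfolding L_def
    using compact_feas continuous_h by (intro compact_Int_closed closed_INT ballI closed_Collect_le) auto
  moreover have z0_L: "z0 \<in> L" using outside_L[OF z0] by blast
  moreover have "continuous_on L (gbar t g k h x)" unfolding gbar_def
  proof (intro continuous_on_diff continuous_on_mult_left continuous_on_sum continuous_on_ln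
      continuous_on_minus continuous_on_subset[OF continuous_g])
    fix l assume "l \<in> {1..k}"
    then show "continuous_on L (h l x)" using continuous_h continuous_on_subset by blast
    show "\<forall>y\<in>L. - h l x y \<noteq> 0" using \<open>l \<in> {1..k}\<close> \<open>\<delta> > 0\<close> by (force simp: L_def)
  qed simp
  ultimately obtain ys where ys: "ys \<in> L" "\<forall>y\<in>L. gbar t g k h x ys \<le> gbar t g k h x y"
    using continuous_attains_inf by blast
  show ?thesis
  proof (intro bexI ballI)
    show "ys \<in> sfeas k h x" using ys(1) L_sfeas by blast
    fix z assume "z \<in> sfeas k h x"
    then show "gbar t g k h x ys \<le> gbar t g k h x z"
      using ys outside_L[of z] z0_L by force
  qed
qed

lemma gbar_midpoint_less:
  assumes "t > 0" "y1 \<in> sfeas k h x" "y2 \<in> sfeas k h x" "y1 \<noteq> y2"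
  shows "midpoint y1 y2 \<in> sfeas k h x \<and>
    gbar t g k h x (midpoint y1 y2) < (gbar t g k h x y1 + gbar t g k h x y2) / 2"
proof -
  define m where "m = midpoint y1 y2"
  obtain i where i: "i \<in> {1..k}" "strongly_convex_on UNIV (h i x)" using strongly_convex_h by blast
  have neg: "h l x y1 < 0" "h l x y2 < 0" if "l \<in> {1..k}" for l
    using assms(2,3) that by (auto simp: sfeas_def)
  have h_mid: "h l x m \<le> (h l x y1 + h l x y2) / 2" if "l \<in> {1..k}" for l
    using convex_onD[OF convex_h[OF that], of "1/2" y1 y2]
    by (simp add: m_def midpoint_eq_convex_combination add_divide_distrib)
  have h_mid_i: "h i x m < (h i x y1 + h i x y2) / 2"
    using strongly_convex_on_midpoint_less[OF i(2) _ _ assms(4)] by (simp add: m_def)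
  have "(ln (- h l x y1) + ln (- h l x y2)) / 2 \<le> ln (- h l x m)" if "l \<in> {1..k}" for l
    using ln_neg_midpoint_le[OF neg[OF that] h_mid[OF that]] .
  moreover have "(ln (- h i x y1) + ln (- h i x y2)) / 2 < ln (- h i x m)"
    using ln_neg_midpoint_less[OF neg[OF i(1)] h_mid_i] .
  ultimately have "(\<Sum>l=1..k. (ln (- h l x y1) + ln (- h l x y2)) / 2) < (\<Sum>l=1..k. ln (- h l x m))"
    using i(1) by (intro sum_strict_mono_ex1) auto
  then have "t * ((\<Sum>l=1..k. ln (- h l x y1)) + (\<Sum>l=1..k. ln (- h l x y2))) / 2
      < t * (\<Sum>l=1..k. ln (- h l x m))"
    using \<open>t > 0\<close> by (simp add: sum.distrib sum_divide_distrib[symmetric])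
  moreover have "g x m \<le> (g x y1 + g x y2) / 2"
    using convex_onD[OF convex_g, of "1/2" y1 y2]
    by (simp add: m_def midpoint_eq_convex_combination add_divide_distrib)
  moreover have "m \<in> sfeas k h x"
    using h_mid neg by (force simp: sfeas_def)
  ultimately show ?thesis unfolding m_def[symmetric] gbar_def by (simp add: field_simps)
qed

lemma ytstar_argmin:
  assumes "t > 0"
  shows "ytstar t g k h x \<in> sfeas k h x"
    and "\<And>z. z \<in> sfeas k h x \<Longrightarrow> gbar t g k h x (ytstar t g k h x) \<le> gbar t g k h x z"
proof -
  have "\<exists>!y. y \<in> sfeas k h x \<and> (\<forall>z\<in>sfeas k h x. gbar t g k h x y \<le> gbar t g k h x z)"
    using gbar_has_min[OF assms]
      midpoint_strictly_convex_argmin_unique[OF gbar_midpoint_less[OF assms]] by blast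
  from theI'[OF this] show "ytstar t g k h x \<in> sfeas k h x"
    and "\<And>z. z \<in> sfeas k h x \<Longrightarrow> gbar t g k h x (ytstar t g k h x) \<le> gbar t g k h x z"
    unfolding ytstar_def by blast+
qed

lemma eventually_g_ytstar_less:
  assumes "z \<in> sfeas k h x" "\<epsilon> > 0"
  shows "\<forall>\<^sub>F t in at_right 0. g x (ytstar t g k h x) < g x z + \<epsilon>"
proof -
  obtain B where B: "\<And>y. y \<in> sfeas k h x \<Longrightarrow> (\<Sum>l=1..k. ln (- h l x y)) \<le> B"
    using sum_ln_constraints_bounded by blast
  define C where "C = \<bar>B - (\<Sum>l=1..k. ln (- h l x z))\<bar> + 1"
  have "C > 0" by (simp add: C_def)
  have "g x (ytstar t g k h x) < g x z + \<epsilon>" if t: "0 < t" "t < \<epsilon> / C" for t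
  proof -
    let ?y = "ytstar t g k h x"
    have "g x ?y - t * (\<Sum>l=1..k. ln (- h l x ?y)) \<le> g x z - t * (\<Sum>l=1..k. ln (- h l x z))"
      using ytstar_argmin[OF t(1)] assms(1) by (auto simp: gbar_def)
    moreover have "t * (\<Sum>l=1..k. ln (- h l x ?y)) \<le> t * B"
      using B[OF ytstar_argmin(1)[OF t(1)]] t(1) by simp
    moreover have "t * (B - (\<Sum>l=1..k. ln (- h l x z))) \<le> t * C"
      using t(1) by (intro mult_left_mono) (auto simp: C_def)
    moreover have "t * C < \<epsilon>" using t \<open>C > 0\<close> by (simp add: field_simps)
    ultimately show ?thesis by (simp add: algebra_simps)
  qed
  moreover have "\<forall>\<^sub>F t in at_right 0. t \<in> {0<..<\<epsilon> / C}"
    using assms(2) \<open>C > 0\<close> by (intro eventually_at_right_real) simp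
  ultimately show ?thesis by (auto elim: eventually_mono)
qed

text \<open>Moving from a feasible point towards a Slater point enters the strictly feasible set at
  once, by convexity of the constraints.\<close>
lemma sfeas_approximates_feas:
  assumes "y \<in> feas k h x" "\<epsilon> > 0"
  obtains z where "z \<in> sfeas k h x" "g x z < g x y + \<epsilon>"
proof -
  obtain z0 where z0: "z0 \<in> sfeas k h x" using sfeas_nonempty by blast
  define w where "w s = (1 - s) *\<^sub>R y + s *\<^sub>R z0" for s :: real
  have w_sfeas: "w s \<in> sfeas k h x" if "0 < s" "s \<le> 1" for s
    unfolding sfeas_def
  proof (intro CollectI ballI)
    fix l assume l: "l \<in> {1..k}"
    have "h l x (w s) \<le> (1 - s) * h l x y + s * h l x z0"
      unfolding w_def using convex_onD[OF convex_h[OF l], of s y z0] that by simp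
    moreover have "(1 - s) * h l x y \<le> 0"
      using assms(1) l that by (intro mult_nonneg_nonpos) (auto simp: feas_def)
    moreover have "s * h l x z0 < 0"
      using z0 l that by (intro mult_pos_neg) (auto simp: sfeas_def)
    ultimately show "h l x (w s) < 0" by linarith
  qed
  have "continuous_on UNIV (\<lambda>s. g x (w s))"
    unfolding w_def by (rule continuous_on_compose2[OF continuous_g]) (auto intro!: continuous_intros)
  then have "isCont (\<lambda>s. g x (w s)) 0"
    by (simp add: continuous_on_eq_continuous_at)
  then have "((\<lambda>s. g x (w s)) \<longlongrightarrow> g x y) (at_right 0)"
    by (simp add: isCont_def filterlim_at_split w_def)
  then have "\<forall>\<^sub>F s in at_right 0. g x (w s) < g x y + \<epsilon>"
    using assms(2) by (intro order_tendstoD) auto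
  moreover have "\<forall>\<^sub>F s in at_right 0. 0 < s \<and> s \<le> (1::real)"
    using eventually_at_right_real[of 0 1] by (rule eventually_mono) auto
  ultimately obtain s where "g x (w s) < g x y + \<epsilon>" "0 < s" "s \<le> 1"
    using eventually_happens'[OF trivial_limit_at_right_real eventually_conj] by blast
  then show ?thesis using that w_sfeas by blast
qed

lemma ytstar_tendsto:
  assumes "ystar g k h x = {y0}"
  shows "((\<lambda>t. ytstar t g k h x) \<longlongrightarrow> y0) (at_right 0)"
  unfolding tendsto_iff
proof (intro allI impI)
  fix e :: real assume "e > 0"
  have y0: "y0 \<in> feas k h x" and y0_min: "\<forall>z\<in>feas k h x. g x y0 \<le> g x z"
    using assms by (auto simp: ystar_def)
  have "g x y0 < g x y" if "y \<in> feas k h x" "y \<noteq> y0" for y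
  proof (rule ccontr)
    assume "\<not> g x y0 < g x y"
    then have "y \<in> ystar g k h x" using y0_min that(1) by (force simp: ystar_def)
    with assms that(2) show False by simp
  qed
  then obtain \<eta> where "\<eta> > 0"
    and near: "\<And>y. y \<in> feas k h x \<Longrightarrow> g x y < g x y0 + \<eta> \<Longrightarrow> dist y y0 < e"
    using compact_unique_argmin_near[OF compact_feas continuous_on_subset[OF continuous_g] y0]
      \<open>e > 0\<close> by blast
  obtain z where "z \<in> sfeas k h x" "g x z < g x y0 + \<eta> / 2"
    using sfeas_approximates_feas[OF y0, of "\<eta> / 2"] \<open>\<eta> > 0\<close> by auto
  with \<open>\<eta> > 0\<close> have "\<forall>\<^sub>F t in at_right 0. g x (ytstar t g k h x) < g x y0 + \<eta>"
    using eventually_g_ytstar_less[of z "\<eta> / 2"] by (auto elim: eventually_mono)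
  moreover have "\<forall>\<^sub>F t in at_right 0. ytstar t g k h x \<in> feas k h x"
    using eventually_at_right_less[of 0] by (rule eventually_mono)
      (use ytstar_argmin(1) sfeas_subset_feas[of k h x] in blast)
  ultimately show "\<forall>\<^sub>F t in at_right 0. dist (ytstar t g k h x) y0 < e"
    by eventually_elim (rule near)
qed

end


theorem theorem11:
  fixes f g :: "real^'n \<Rightarrow> real^'m \<Rightarrow> real"
    and h :: "nat \<Rightarrow> real^'n \<Rightarrow> real^'m \<Rightarrow> real"
    and k :: nat and X :: "(real^'n) set" and R :: real and x :: "real^'n"
  assumes C1_f: "C1_on (\<lambda>z. f (fst z) (snd z)) UNIV"
    and C1_g: "C2_on (\<lambda>z. g (fst z) (snd z)) UNIV"
    and C1_h: "\<forall>i\<in>{1..k}. C2_on (\<lambda>z. h i (fst z) (snd z)) UNIV"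
    and C2_convex: "convex X" and C2_compact: "compact X"
    and C2_slater: "\<forall>x\<in>X. \<exists>y\<in>feas k h x. \<forall>i\<in>{1..k}. h i x y < 0"
    and C3_compact: "\<forall>x\<in>X. compact (feas k h x)"
    and C3_bound: "\<forall>x\<in>X. \<forall>y\<in>feas k h x. norm y \<le> R"
    and CV_g: "\<forall>x. convex_on UNIV (g x)"
    and CV_h: "\<forall>x. \<forall>i\<in>{1..k}. convex_on UNIV (h i x)"
    and CV_strong: "\<forall>x. \<exists>i\<in>{1..k}. strongly_convex_on UNIV (h i x)"
    and x_in: "x \<in> X"
    and single: "\<exists>y0. ystar g k h x = {y0}"
  shows "((\<lambda>t. phit t f g k h x) \<longlongrightarrow> phi f g k h x) (at_right 0)"
proof -
  have slice: "continuous_on UNIV (F x)" if "C1_on (\<lambda>z. F (fst z) (snd z)) UNIV"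
    for F :: "real^'n \<Rightarrow> real^'m \<Rightarrow> real"
    using continuous_on_slice[OF C1_on_imp_continuous_on[OF that]] .
  interpret log_barrier g k h x
  proof
    show "compact (feas k h x)" using C3_compact x_in by blast
    show "sfeas k h x \<noteq> {}" using C2_slater x_in unfolding sfeas_def by blast
    show "continuous_on UNIV (g x)" using slice[OF C2_on_imp_C1_on[OF C1_g]] .
    show "continuous_on UNIV (h l x)" if "l \<in> {1..k}" for l
      using slice[OF C2_on_imp_C1_on[OF C1_h[rule_format, OF that]]] .
    show "convex_on UNIV (g x)" using CV_g by blast
    show "convex_on UNIV (h l x)" if "l \<in> {1..k}" for l using CV_h that by blast
    show "\<exists>i\<in>{1..k}. strongly_convex_on UNIV (h i x)" using CV_strong by blast
  qed
  obtain y0 where y0: "ystar g k h x = {y0}" using single by blast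
  have "isCont (f x) y0" using slice[OF C1_f] by (simp add: continuous_on_eq_continuous_at)
  then have "((\<lambda>t. f x (ytstar t g k h x)) \<longlongrightarrow> f x y0) (at_right 0)"
    using ytstar_tendsto[OF y0] by (rule isCont_tendsto_compose)
  then show ?thesis by (simp add: phit_def phi_def y0)
qed

end
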